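(* Let $D=(E,\mathcal{F})$ be a proper set system, $a,b\in E$ with $a\neq b$, and let $A\subseteq E$ satisfy $|A\cap\{a,b\}|=1$. Then $\omega(D*A)=\omega(D'_{ab}*A)$.
   Context: A set system $D=(E,\mathcal{F})$ is a finite set $E$ together with a collection $\mathcal{F}$ of subsets of $E$ (feasible sets); proper means $\mathcal{F}\neq\emptyset$. $\triangle$ denotes symmetric difference. For $A\subseteq E$, the twist is $D*A=(E,\{A\triangle X: X\in\mathcal{F}\})$. The width $\omega(D)$ of a proper set system is the size of a largest feasible set minus the size of a smallest feasible set. For distinct $a,b\in E$, the result of exchanging handle ends of $a$ and $b$ is $D'_{ab}=(E,\mathcal{F}'_{ab})$ with $\mathcal{F}'_{ab}=\mathcal{F}\triangle\{F\cup\{a,b\}\mid F\in\mathcal{F},\ F\subseteq E\setminus\{a,b\}\}$. *)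

theory Defs
  imports Main
begin

definition set_system :: "'a set \<Rightarrow> 'a set set \<Rightarrow> bool" where
  "set_system E F \<longleftrightarrow> finite E \<and> F \<subseteq> Pow E"

definition proper_set_system :: "'a set \<Rightarrow> 'a set set \<Rightarrow> bool" where
  "proper_set_system E F \<longleftrightarrow> set_system E F \<and> F \<noteq> {}"

definition twist :: "'a set set \<Rightarrow> 'a set \<Rightarrow> 'a set set" where
  "twist F A = (\<lambda>X. (A - X) \<union> (X - A)) ` F"

definition width :: "'a set set \<Rightarrow> nat" where
  "width F = Max (card ` F) - Min (card ` F)"

definition exch_handle :: "'a set \<Rightarrow> 'a set set \<Rightarrow> 'a \<Rightarrow> 'a \<Rightarrow> 'a set set" where
  "exch_handle E F a b = (let G = {X \<union> {a, b} | X. X \<in> F \<and> X \<subseteq> E - {a, b}} in (F - G) \<union> (G - F))"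

end

theory Submission
  imports Defs "HOL-Combinatorics.Transposition"
begin

text \<open>The width of a set system only depends on the sizes of its feasible sets. If \<open>Y\<close> avoids
  \<open>a\<close> and \<open>b\<close>, then \<open>A \<triangle> Y\<close> contains exactly one of them (as \<open>A\<close> does), and
  \<open>A \<triangle> (Y \<union> {a, b})\<close> is its image under the transposition of \<open>a\<close> and \<open>b\<close>; so both have the
  same size. The exchange only trades such feasible sets \<open>Y\<close> for \<open>Y \<union> {a, b}\<close> or vice versa,
  hence the twists of \<open>D\<close> and \<open>D'\<^sub>a\<^sub>b\<close> by \<open>A\<close> have the same sizes of feasible sets.\<close>

lemma card_Int_doubleton_eq_1_iff:
  assumes "a \<noteq> b"
  shows "card (A \<inter> {a, b}) = 1 \<longleftrightarrow> (a \<in> A \<longleftrightarrow> b \<notin> A)"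
  using assms by (cases "a \<in> A"; cases "b \<in> A") auto

lemma sym_diff_Un_doubleton_eq_transpose_image:
  assumes "a \<noteq> b" "a \<notin> Y" "b \<notin> Y" "a \<in> A \<longleftrightarrow> b \<notin> A"
  shows "sym_diff A (Y \<union> {a, b}) = transpose a b ` sym_diff A Y"
proof (rule set_eqI)
  fix x
  have "x \<in> transpose a b ` S \<longleftrightarrow> transpose a b x \<in> S" for S
    by (metis image_iff transpose_involutory)
  then show "x \<in> sym_diff A (Y \<union> {a, b}) \<longleftrightarrow> x \<in> transpose a b ` sym_diff A Y"
    using assms by (cases "x = a"; cases "x = b") auto
qed

lemma card_sym_diff_Un_doubleton:
  assumes "a \<noteq> b" "a \<notin> Y" "b \<notin> Y" "a \<in> A \<longleftrightarrow> b \<notin> A"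
  shows "card (sym_diff A (Y \<union> {a, b})) = card (sym_diff A Y)"
  unfolding sym_diff_Un_doubleton_eq_transpose_image[OF assms]
  by (rule card_image) (simp add: inj_on_subset[OF inj_transpose])

lemma image_exch_handle_eq:
  assumes "\<And>Y. Y \<in> F \<Longrightarrow> Y \<subseteq> E - {a, b} \<Longrightarrow> f (Y \<union> {a, b}) = f Y"
  shows "f ` exch_handle E F a b = f ` F"
proof -
  define G where "G = {Y \<union> {a, b} | Y. Y \<in> F \<and> Y \<subseteq> E - {a, b}}"
  have exch: "exch_handle E F a b = (F - G) \<union> (G - F)"
    unfolding exch_handle_def G_def Let_def ..
  have G_partner: "\<exists>Y \<in> F - G. f X = f Y" if "X \<in> G" for X
  proof -
    from that obtain Y where Y: "X = Y \<union> {a, b}" "Y \<in> F" "Y \<subseteq> E - {a, b}"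
      unfolding G_def by blast
    then have "Y \<notin> G"
      unfolding G_def by blast
    moreover have "f X = f Y"
      using Y assms by simp
    ultimately show ?thesis
      using Y(2) by blast
  qed
  show ?thesis
  proof (intro equalityI image_subsetI)
    fix X assume "X \<in> exch_handle E F a b"
    then consider "X \<in> F" | "X \<in> G"
      unfolding exch by blast
    then show "f X \<in> f ` F"
      by cases (use G_partner in blast)+
  next
    fix X assume "X \<in> F"
    show "f X \<in> f ` exch_handle E F a b"
    proof (cases "X \<in> G")
      case True
      then show ?thesis
        unfolding exch using G_partner by blast
    next
      case False
      then show ?thesis
        unfolding exch using \<open>X \<in> F\<close> by blast
    qed
  qed
qed

lemma width_cong_card_image:
  assumes "card ` F = card ` F'"
  shows "width F = width F'"
  unfolding width_def assms ..

theorem proposition3p5: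
  fixes E :: "'a set" and F :: "'a set set" and A :: "'a set" and a b :: 'a
  assumes "proper_set_system E F"
    and "a \<in> E" and "b \<in> E" and "a \<noteq> b"
    and "A \<subseteq> E"
    and "card (A \<inter> {a, b}) = 1"
  shows "width (twist F A) = width (twist (exch_handle E F a b) A)"
proof -
  have ab: "a \<in> A \<longleftrightarrow> b \<notin> A"
    using card_Int_doubleton_eq_1_iff[OF assms(4)] assms(6) by simp
  have "card (sym_diff A (Y \<union> {a, b})) = card (sym_diff A Y)" if "Y \<subseteq> E - {a, b}" for Y
    using that by (intro card_sym_diff_Un_doubleton[OF assms(4) _ _ ab]) blast+
  then have "(\<lambda>X. card (sym_diff A X)) ` exch_handle E F a b = (\<lambda>X. card (sym_diff A X)) ` F"
    by (rule image_exch_handle_eq)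
  then have "card ` twist (exch_handle E F a b) A = card ` twist F A"
    unfolding twist_def image_image .
  then show ?thesis
    by (rule width_cong_card_image[symmetric])
qed

end
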